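(* CGTDS$^F$ reduces (via a computable many-one reduction) to CGTDS.
   Context: An instance of CGTDS consists of a rational discount factor $0<\lambda<1$, a rational target $t$, rational weights $a_1,\dots,a_k$, and an $\omega$-regular expression $e$ over $\{a_1,\dots,a_k\}$; it asks whether there is an infinite $w\in\{a_1,\dots,a_k\}^\omega$ in the language of $e$ with $\sum_{i=0}^\infty w(i)\lambda^i=t$. An instance of CGTDS$^F$ has the same data except that $e$ is a regular expression, and it asks whether there is a finite $w=w(0)\cdots w(n-1)\in\{a_1,\dots,a_k\}^*$ in the language of $e$ with $\sum_{i=0}^{n-1} w(i)\lambda^i=t$. *)

theory Defs
  imports Complex_Main "HOL-Library.Nat_Bijection" "HOL-Library.Omega_Words_Fun"
begin

datatype 'a rexp = Zero | One | Atom 'a | Plus "'a rexp" "'a rexp"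
  | Times "'a rexp" "'a rexp" | Star "'a rexp"

fun lang :: "'a rexp \<Rightarrow> 'a list set" where
  "lang Zero = {}"
| "lang One = {[]}"
| "lang (Atom a) = {[a]}"
| "lang (Plus r s) = lang r \<union> lang s"
| "lang (Times r s) = {u @ v | u v. u \<in> lang r \<and> v \<in> lang s}"
| "lang (Star r) = {concat us | us. \<forall>u\<in>set us. u \<in> lang r}"

fun atoms :: "'a rexp \<Rightarrow> 'a set" where
  "atoms Zero = {}"
| "atoms One = {}"
| "atoms (Atom a) = {a}"
| "atoms (Plus r s) = atoms r \<union> atoms s"
| "atoms (Times r s) = atoms r \<union> atoms s"
| "atoms (Star r) = atoms r"

datatype 'a orexp = Omega "'a rexp" | OTimes "'a rexp" "'a orexp" | OPlus "'a orexp" "'a orexp"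

text \<open>r^omega: infinite concatenations of nonempty words of L(r)\<close>
definition omega_lang :: "'a list set \<Rightarrow> 'a word set" where
  "omega_lang L = {w. \<exists>p::nat \<Rightarrow> nat. p 0 = 0 \<and> strict_mono p \<and>
      (\<forall>i. map w [p i..<p (Suc i)] \<in> L)}"

fun olang :: "'a orexp \<Rightarrow> 'a word set" where
  "olang (Omega r) = omega_lang (lang r)"
| "olang (OTimes r e) = {u \<frown> v | u v. u \<in> lang r \<and> v \<in> olang e}"
| "olang (OPlus e f) = olang e \<union> olang f"

fun oatoms :: "'a orexp \<Rightarrow> 'a set" where
  "oatoms (Omega r) = atoms r"
| "oatoms (OTimes r e) = atoms r \<union> oatoms e"
| "oatoms (OPlus e f) = oatoms e \<union> oatoms f"

text \<open>Instances: (lambda, t, [a_1,...,a_k], e)\<close>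
type_synonym inst_F = "rat \<times> rat \<times> rat list \<times> rat rexp"
type_synonym inst = "rat \<times> rat \<times> rat list \<times> rat orexp"

definition valid_F :: "inst_F \<Rightarrow> bool" where
  "valid_F I = (case I of (lam, t, ks, e) \<Rightarrow> 0 < lam \<and> lam < 1 \<and> atoms e \<subseteq> set ks)"

definition valid :: "inst \<Rightarrow> bool" where
  "valid I = (case I of (lam, t, ks, e) \<Rightarrow> 0 < lam \<and> lam < 1 \<and> oatoms e \<subseteq> set ks)"

definition CGTDS_F :: "inst_F \<Rightarrow> bool" where
  "CGTDS_F I = (case I of (lam, t, ks, e) \<Rightarrow>
     (\<exists>w. set w \<subseteq> set ks \<and> w \<in> lang e \<and> (\<Sum>i<length w. w ! i * lam ^ i) = t))"

definition CGTDS :: "inst \<Rightarrow> bool" where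
  "CGTDS I = (case I of (lam, t, ks, e) \<Rightarrow>
     (\<exists>w. range w \<subseteq> set ks \<and> w \<in> olang e \<and>
        (\<lambda>i. real_of_rat (w i) * real_of_rat lam ^ i) sums real_of_rat t))"

datatype recf = RZ | RS | RProj nat | RComp recf "recf list" | RPrec recf recf | RMn recf

inductive reval :: "recf \<Rightarrow> nat list \<Rightarrow> nat \<Rightarrow> bool" where
  "reval RZ xs 0"
| "reval RS (x # xs) (Suc x)"
| "i < length xs \<Longrightarrow> reval (RProj i) xs (xs ! i)"
| "list_all2 (\<lambda>g y. reval g xs y) gs ys \<Longrightarrow> reval f ys z \<Longrightarrow> reval (RComp f gs) xs z"
| "reval f xs y \<Longrightarrow> reval (RPrec f g) (0 # xs) y"
| "reval (RPrec f g) (n # xs) y \<Longrightarrow> reval g (n # y # xs) z \<Longrightarrow> reval (RPrec f g) (Suc n # xs) z"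
| "reval f (n # xs) 0 \<Longrightarrow> (\<forall>m<n. \<exists>y. y \<noteq> 0 \<and> reval f (m # xs) y) \<Longrightarrow> reval (RMn f) xs n"

definition enc_rat :: "rat \<Rightarrow> nat" where
  "enc_rat q = prod_encode (int_encode (fst (quotient_of q)), nat (snd (quotient_of q)))"

fun enc_rexp :: "rat rexp \<Rightarrow> nat" where
  "enc_rexp Zero = prod_encode (0, 0)"
| "enc_rexp One = prod_encode (1, 0)"
| "enc_rexp (Atom a) = prod_encode (2, enc_rat a)"
| "enc_rexp (Plus r s) = prod_encode (3, prod_encode (enc_rexp r, enc_rexp s))"
| "enc_rexp (Times r s) = prod_encode (4, prod_encode (enc_rexp r, enc_rexp s))"
| "enc_rexp (Star r) = prod_encode (5, enc_rexp r)"

fun enc_orexp :: "rat orexp \<Rightarrow> nat" where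
  "enc_orexp (Omega r) = prod_encode (0, enc_rexp r)"
| "enc_orexp (OTimes r e) = prod_encode (1, prod_encode (enc_rexp r, enc_orexp e))"
| "enc_orexp (OPlus e f) = prod_encode (2, prod_encode (enc_orexp e, enc_orexp f))"

definition enc_inst_F :: "inst_F \<Rightarrow> nat" where
  "enc_inst_F I = (case I of (lam, t, ks, e) \<Rightarrow>
     list_encode [enc_rat lam, enc_rat t, list_encode (map enc_rat ks), enc_rexp e])"

definition enc_inst :: "inst \<Rightarrow> nat" where
  "enc_inst I = (case I of (lam, t, ks, e) \<Rightarrow>
     list_encode [enc_rat lam, enc_rat t, list_encode (map enc_rat ks), enc_orexp e])"

definition computable_red :: "(inst_F \<Rightarrow> inst) \<Rightarrow> bool" where
  "computable_red f = (\<exists>p. \<forall>I. reval p [enc_inst_F I] (enc_inst (f I)))"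

end

theory Submission
  imports Defs
begin

text \<open>Pad a finite word with zeros: \<open>w 0\<^sup>\<omega>\<close> has the same discounted sum as \<open>w\<close>, and the
  words of \<open>e \<cdot> 0\<^sup>\<omega>\<close> are exactly the paddings of the words of \<open>e\<close>. So adding the weight 0
  and replacing \<open>e\<close> by \<open>e \<cdot> 0\<^sup>\<omega>\<close> is a many-one reduction. On encodings it only
  rearranges Cantor pairs, which a partial recursive program built from primitive
  recursion and one minimisation (for unpairing) can do.\<close>

lemma reval_comp1: "reval g xs y \<Longrightarrow> reval f [y] z \<Longrightarrow> reval (RComp f [g]) xs z"
  by (rule reval.intros(4)[where ys = "[y]"]) auto

lemma reval_comp2:
  "reval g1 xs y1 \<Longrightarrow> reval g2 xs y2 \<Longrightarrow> reval f [y1, y2] z \<Longrightarrow> reval (RComp f [g1, g2]) xs z"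
  by (rule reval.intros(4)[where ys = "[y1, y2]"]) auto

lemma reval_proj0: "reval (RProj 0) (x # xs) x"
  using reval.intros(3)[of 0 "x # xs"] by simp

lemma reval_proj1: "reval (RProj 1) (x # y # xs) y"
  using reval.intros(3)[of 1 "x # y # xs"] by simp

fun r_const :: "nat \<Rightarrow> recf" where
  "r_const 0 = RZ"
| "r_const (Suc k) = RComp RS [r_const k]"

lemma reval_r_const: "reval (r_const k) xs k"
  by (induction k) (auto intro: reval.intros reval_comp1)

definition r_add :: recf where
  "r_add = RPrec (RProj 0) (RComp RS [RProj 1])"

lemma reval_r_add: "reval r_add (n # x # xs) (n + x)"
proof (induction n)
  case 0
  show ?case unfolding r_add_def using reval.intros(5)[OF reval_proj0] by simp
next
  case (Suc n)
  have "reval (RComp RS [RProj 1]) (n # (n + x) # x # xs) (Suc (n + x))"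
    by (rule reval_comp1[OF reval_proj1 reval.intros(2)])
  then show ?case
    using reval.intros(6)[OF Suc[unfolded r_add_def]] unfolding r_add_def by simp
qed

definition r_pred :: recf where
  "r_pred = RPrec RZ (RProj 0)"

lemma reval_r_pred: "reval r_pred (n # xs) (n - 1)"
proof (induction n)
  case 0
  show ?case unfolding r_pred_def using reval.intros(5)[OF reval.intros(1)] by simp
next
  case (Suc n)
  show ?case
    using reval.intros(6)[OF Suc[unfolded r_pred_def] reval_proj0] unfolding r_pred_def by simp
qed

definition r_monus :: recf where
  "r_monus = RPrec (RProj 0) (RComp r_pred [RProj 1])"

lemma reval_r_monus: "reval r_monus (n # x # xs) (x - n)"
proof (induction n)
  case 0
  show ?case unfolding r_monus_def using reval.intros(5)[OF reval_proj0] by simp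
next
  case (Suc n)
  have "reval (RComp r_pred [RProj 1]) (n # (x - n) # x # xs) (x - Suc n)"
    using reval_comp1[OF reval_proj1 reval_r_pred[of "x - n" "[]"]] by simp
  then show ?case
    using reval.intros(6)[OF Suc[unfolded r_monus_def]] unfolding r_monus_def by simp
qed

definition r_triangle :: recf where
  "r_triangle = RPrec RZ (RComp r_add [RProj 1, RComp RS [RProj 0]])"

lemma reval_r_triangle: "reval r_triangle (k # xs) (triangle k)"
proof (induction k)
  case 0
  show ?case unfolding r_triangle_def using reval.intros(5)[OF reval.intros(1)] by simp
next
  case (Suc k)
  have "reval (RComp r_add [RProj 1, RComp RS [RProj 0]]) (k # triangle k # xs)
      (triangle k + Suc k)"
    by (rule reval_comp2[OF reval_proj1 reval_comp1[OF reval_proj0 reval.intros(2)] reval_r_add])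
  then show ?case
    using reval.intros(6)[OF Suc[unfolded r_triangle_def]] unfolding r_triangle_def by simp
qed

definition r_pair :: recf where
  "r_pair = RComp r_add [RComp r_triangle [RComp r_add [RProj 0, RProj 1]], RProj 0]"

lemma reval_r_pair: "reval r_pair [a, b] (prod_encode (a, b))"
  unfolding r_pair_def prod_encode_def split
  by (rule reval_comp2[OF reval_comp1[OF reval_comp2[OF reval_proj0 reval_proj1 reval_r_add]
        reval_r_triangle] reval_proj0 reval_r_add])

lemma triangle_mono: "m \<le> n \<Longrightarrow> triangle m \<le> triangle n"
  by (induction n rule: dec_induct) auto

definition r_pair_sum_test :: recf where
  "r_pair_sum_test = RComp r_monus [RComp r_triangle [RComp RS [RProj 0]], RComp RS [RProj 1]]"

lemma reval_r_pair_sum_test: "reval r_pair_sum_test [k, n] (Suc n - triangle (Suc k))"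
  unfolding r_pair_sum_test_def
  by (rule reval_comp2[OF reval_comp1[OF reval_comp1[OF reval_proj0 reval.intros(2)]
        reval_r_triangle] reval_comp1[OF reval_proj1 reval.intros(2)] reval_r_monus])

definition r_pair_sum :: recf where
  "r_pair_sum = RMn r_pair_sum_test"

text \<open>Since \<open>prod_encode (a, b) = triangle (a + b) + a\<close> with \<open>a \<le> a + b\<close>, the number \<open>a + b\<close>
  is the least \<open>k\<close> with \<open>prod_encode (a, b) < triangle (Suc k)\<close>.\<close>
lemma reval_r_pair_sum: "reval r_pair_sum [prod_encode (a, b)] (a + b)"
  unfolding r_pair_sum_def
proof (rule reval.intros(7))
  show "reval r_pair_sum_test [a + b, prod_encode (a, b)] 0"
    using reval_r_pair_sum_test[of "a + b" "prod_encode (a, b)"] by (simp add: prod_encode_def)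
  show "\<forall>m<a + b. \<exists>y. y \<noteq> 0 \<and> reval r_pair_sum_test [m, prod_encode (a, b)] y"
  proof (intro allI impI)
    fix m
    assume "m < a + b"
    then have "triangle (Suc m) \<le> triangle (a + b)"
      using triangle_mono[of "Suc m" "a + b"] by simp
    then have "Suc (prod_encode (a, b)) - triangle (Suc m) \<noteq> 0"
      by (simp add: prod_encode_def)
    then show "\<exists>y. y \<noteq> 0 \<and> reval r_pair_sum_test [m, prod_encode (a, b)] y"
      using reval_r_pair_sum_test by blast
  qed
qed

definition r_fst :: recf where
  "r_fst = RComp r_monus [RComp r_triangle [r_pair_sum], RProj 0]"

definition r_snd :: recf where
  "r_snd = RComp r_monus [r_fst, r_pair_sum]"

lemma reval_r_fst: "reval r_fst [prod_encode (a, b)] a"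
proof -
  have "reval r_monus [triangle (a + b), prod_encode (a, b)] a"
    using reval_r_monus[of "triangle (a + b)" "prod_encode (a, b)" "[]"]
    by (simp add: prod_encode_def)
  then show ?thesis
    unfolding r_fst_def by (rule reval_comp2[OF reval_comp1[OF reval_r_pair_sum reval_r_triangle]
          reval_proj0])
qed

lemma reval_r_snd: "reval r_snd [prod_encode (a, b)] b"
  unfolding r_snd_def
  using reval_comp2[OF reval_r_fst reval_r_pair_sum reval_r_monus[of a "a + b" "[]"]] by simp

definition r_cons :: recf where
  "r_cons = RComp RS [r_pair]"

lemma reval_r_cons: "reval r_cons [x, list_encode xs] (list_encode (x # xs))"
  unfolding r_cons_def using reval_comp1[OF reval_r_pair reval.intros(2)] by simp

lemma reval_pred_list_encode:
  "reval (RComp r_pred [RProj 0]) [list_encode (x # xs)] (prod_encode (x, list_encode xs))"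
proof -
  have "reval r_pred [list_encode (x # xs)] (prod_encode (x, list_encode xs))"
    using reval_r_pred[of "list_encode (x # xs)" "[]"] by simp
  then show ?thesis by (rule reval_comp1[OF reval_proj0])
qed

definition r_hd :: recf where
  "r_hd = RComp r_fst [RComp r_pred [RProj 0]]"

definition r_tl :: recf where
  "r_tl = RComp r_snd [RComp r_pred [RProj 0]]"

lemma reval_r_hd: "reval r_hd [list_encode (x # xs)] x"
  unfolding r_hd_def by (rule reval_comp1[OF reval_pred_list_encode reval_r_fst])

lemma reval_r_tl: "reval r_tl [list_encode (x # xs)] (list_encode xs)"
  unfolding r_tl_def by (rule reval_comp1[OF reval_pred_list_encode reval_r_snd])

fun r_drop :: "nat \<Rightarrow> recf" where
  "r_drop 0 = RProj 0"
| "r_drop (Suc k) = RComp r_tl [r_drop k]"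

lemma reval_r_drop: "k \<le> length xs \<Longrightarrow> reval (r_drop k) [list_encode xs] (list_encode (drop k xs))"
proof (induction k)
  case 0
  show ?case using reval_proj0 by simp
next
  case (Suc k)
  then have "reval (r_drop k) [list_encode xs] (list_encode (xs ! k # drop (Suc k) xs))"
    by (simp add: Cons_nth_drop_Suc)
  then show ?case by (simp only: r_drop.simps) (rule reval_comp1[OF _ reval_r_tl])
qed

definition r_nth :: "nat \<Rightarrow> recf" where
  "r_nth k = RComp r_hd [r_drop k]"

lemma reval_r_nth:
  assumes "k < length xs"
  shows "reval (r_nth k) [list_encode xs] (xs ! k)"
proof -
  have "reval (r_drop k) [list_encode xs] (list_encode (xs ! k # drop (Suc k) xs))"
    using reval_r_drop[of k xs] Cons_nth_drop_Suc[OF assms] assms by simp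
  then show ?thesis unfolding r_nth_def by (rule reval_comp1[OF _ reval_r_hd])
qed

fun r_list :: "recf list \<Rightarrow> recf" where
  "r_list [] = r_const 0"
| "r_list (g # gs) = RComp r_cons [g, r_list gs]"

lemma reval_r_list:
  "list_all2 (\<lambda>g y. reval g xs y) gs ys \<Longrightarrow> reval (r_list gs) xs (list_encode ys)"
proof (induction rule: list_all2_induct)
  case Nil
  show ?case using reval_r_const[of 0] by simp
next
  case (Cons g y gs ys)
  from Cons(1,3) show ?case unfolding r_list.simps by (rule reval_comp2[OF _ _ reval_r_cons])
qed

definition zero_padding :: "inst_F \<Rightarrow> inst" where
  "zero_padding I = (case I of (lam, t, ks, e) \<Rightarrow> (lam, t, 0 # ks, OTimes e (Omega (Atom 0))))"

definition r_zero_padding :: recf where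
  "r_zero_padding = r_list [r_nth 0, r_nth 1, RComp r_cons [r_const (enc_rat 0), r_nth 2],
     RComp r_pair [r_const 1, RComp r_pair [r_nth 3, r_const (enc_orexp (Omega (Atom 0)))]]]"

lemma computable_zero_padding: "computable_red zero_padding"
  unfolding computable_red_def
proof (intro exI allI)
  fix I :: inst_F
  obtain lam t ks e where I: "I = (lam, t, ks, e)" by (cases I) auto
  define xs where "xs = [enc_rat lam, enc_rat t, list_encode (map enc_rat ks), enc_rexp e]"
  have component: "reval (r_nth k) [list_encode xs] (xs ! k)" if "k < 4" for k
    using that by (intro reval_r_nth) (simp add: xs_def)
  have "reval (r_nth 2) [list_encode xs] (list_encode (map enc_rat ks))"
    using component[of 2] by (simp add: xs_def)
  then have weights: "reval (RComp r_cons [r_const (enc_rat 0), r_nth 2]) [list_encode xs]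
      (list_encode (enc_rat 0 # map enc_rat ks))"
    by (rule reval_comp2[OF reval_r_const _ reval_r_cons])
  have "reval (r_nth 3) [list_encode xs] (enc_rexp e)"
    using component[of 3] by (simp add: xs_def)
  then have expr: "reval (RComp r_pair [r_const 1, RComp r_pair [r_nth 3,
      r_const (enc_orexp (Omega (Atom 0)))]]) [list_encode xs] (enc_orexp (OTimes e (Omega (Atom 0))))"
    unfolding enc_orexp.simps(2)
    by (rule reval_comp2[OF reval_r_const reval_comp2[OF _ reval_r_const reval_r_pair] reval_r_pair])
  have "reval r_zero_padding [list_encode xs] (list_encode [xs ! 0, xs ! 1,
      list_encode (enc_rat 0 # map enc_rat ks), enc_orexp (OTimes e (Omega (Atom 0)))])"
    unfolding r_zero_padding_def
    using component[of 0] component[of 1] weights expr by (intro reval_r_list) simp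
  then show "reval r_zero_padding [enc_inst_F I] (enc_inst (zero_padding I))"
    by (simp add: I xs_def enc_inst_F_def enc_inst_def zero_padding_def)
qed

lemma lang_subset_atoms: "w \<in> lang r \<Longrightarrow> set w \<subseteq> atoms r"
  by (induction r arbitrary: w) fastforce+

lemma omega_lang_singleton: "omega_lang {[a]} = {\<lambda>_. a}"
proof (intro equalityI subsetI)
  fix v :: "'a word"
  assume "v \<in> omega_lang {[a]}"
  then obtain p :: "nat \<Rightarrow> nat" where p0: "p 0 = 0" and blocks: "\<And>i. map v [p i..<p (Suc i)] = [a]"
    unfolding omega_lang_def by auto
  have step: "p (Suc i) = Suc (p i) \<and> v (p i) = a" for i
  proof -
    have "length (map v [p i..<p (Suc i)]) = 1" using blocks[of i] by simp
    then have "p (Suc i) = Suc (p i)" by simp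
    then show ?thesis using blocks[of i] by simp
  qed
  have "p i = i" for i by (induction i) (auto simp: p0 step)
  then show "v \<in> {\<lambda>_. a}" using step by auto
next
  fix v :: "'a word"
  assume "v \<in> {\<lambda>_. a}"
  then show "v \<in> omega_lang {[a]}"
    unfolding omega_lang_def by (intro CollectI exI[of _ id]) (auto simp: strict_mono_def)
qed

lemma olang_OTimes_Omega_Atom: "olang (OTimes e (Omega (Atom a))) = {u \<frown> (\<lambda>_. a) | u. u \<in> lang e}"
  by (auto simp: omega_lang_singleton)

lemma sums_conc_zeros_iff:
  "(\<lambda>i. real_of_rat ((u \<frown> (\<lambda>_. 0)) i) * real_of_rat lam ^ i) sums real_of_rat t \<longleftrightarrow>
     (\<Sum>i<length u. u ! i * lam ^ i) = t"
proof -
  have "(\<lambda>i. real_of_rat ((u \<frown> (\<lambda>_. 0)) i) * real_of_rat lam ^ i) sums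
      (\<Sum>i<length u. real_of_rat ((u \<frown> (\<lambda>_. 0)) i) * real_of_rat lam ^ i)"
    by (rule sums_finite) auto
  also have "(\<Sum>i<length u. real_of_rat ((u \<frown> (\<lambda>_. 0)) i) * real_of_rat lam ^ i)
      = real_of_rat (\<Sum>i<length u. u ! i * lam ^ i)"
    by (simp add: of_rat_sum of_rat_mult of_rat_power)
  finally show ?thesis
    using sums_unique2 by (metis of_rat_eq_iff)
qed

lemma valid_zero_padding: "valid_F I \<Longrightarrow> valid (zero_padding I)"
  by (auto simp: valid_F_def valid_def zero_padding_def split: prod.splits)

lemma CGTDS_zero_padding_iff:
  assumes "valid_F I"
  shows "CGTDS (zero_padding I) \<longleftrightarrow> CGTDS_F I"
proof -
  obtain lam t ks e where I: "I = (lam, t, ks, e)" by (cases I) auto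
  have atoms: "set u \<subseteq> set ks" if "u \<in> lang e" for u
    using lang_subset_atoms[OF that] assms by (auto simp: valid_F_def I)
  have range_padding: "range (u \<frown> (\<lambda>_. 0)) \<subseteq> set (0 # ks)" if "u \<in> lang e" for u
    using atoms[OF that] by auto
  have "CGTDS (zero_padding I) \<longleftrightarrow> (\<exists>u \<in> lang e.
      (\<lambda>i. real_of_rat ((u \<frown> (\<lambda>_. 0)) i) * real_of_rat lam ^ i) sums real_of_rat t)"
    unfolding CGTDS_def zero_padding_def I prod.case olang_OTimes_Omega_Atom
    using range_padding by blast
  also have "\<dots> \<longleftrightarrow> (\<exists>u \<in> lang e. (\<Sum>i<length u. u ! i * lam ^ i) = t)"
    by (simp add: sums_conc_zeros_iff)
  also have "\<dots> \<longleftrightarrow> CGTDS_F I"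
    using atoms by (auto simp: CGTDS_F_def I)
  finally show ?thesis .
qed

theorem theorem6:
  shows "\<exists>f :: inst_F \<Rightarrow> inst. computable_red f \<and>
           (\<forall>I. valid_F I \<longrightarrow> valid (f I) \<and> (CGTDS_F I \<longleftrightarrow> CGTDS (f I)))"
  using computable_zero_padding valid_zero_padding CGTDS_zero_padding_iff by blast

end
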